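(* Let $(S,\Delta,\mathbb{P})$ be a probability space, $(U,d)$ a separable metric space, $\mathfrak{X}$ the set of $U$-valued random variables on $S$, $r\geq0$, $\mathcal{I}$ an ideal on $\mathbb{N}$, and $\underline{X}=\{X_n\}$ a sequence in $\mathfrak{X}$. Suppose that to each $Y\in\Gamma^{r^w}_{\underline{X}}(\mathcal{I}^{\mathbb{P}})$ a weak cluster constant $\delta_*(Y)$ is associated and that $\inf\{\delta_*(Y):Y\in\Gamma^{r^w}_{\underline{X}}(\mathcal{I}^{\mathbb{P}})\}>0$. Then $\Gamma^{r^w}_{\underline{X}}(\mathcal{I}^{\mathbb{P}})$ is closed in $(\mathfrak{X}^0,\rho)$.
   Context: The Ky Fan metric is $\rho(X,Y)=\inf\{\varepsilon>0:\mathbb{P}(d(X,Y)>\varepsilon)\leq\varepsilon\}$; $\mathfrak{X}^0$ is the set of equivalence classes of $\mathfrak{X}$ under almost sure equality, on which $\rho$ is a metric. An ideal on $\mathbb{N}$ is a family $\mathcal{I}\subseteq\mathcal{P}(\mathbb{N})$ with $\varnothing\in\mathcal{I}$, closed under finite unions and under subsets. $\Gamma^{r^w}_{\underline{X}}(\mathcal{I}^{\mathbb{P}})$ is the set of $Y\in\mathfrak{X}$ for which there is $\delta_*=\delta_*(Y)>0$ with $\{n:\mathbb{P}(d(X_n,Y)<r+\varepsilon)>\delta_*\}\notin\mathcal{I}$ for every $\varepsilon>0$; such a $\delta_*(Y)$ is called a weak cluster constant of $Y$ (with respect to $\underline{X}$). *)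

theory Defs
  imports "HOL-Probability.Probability"
begin

definition nat_ideal :: "nat set set \<Rightarrow> bool" where
  "nat_ideal I \<longleftrightarrow> {} \<in> I \<and> (\<forall>A\<in>I. \<forall>B\<in>I. A \<union> B \<in> I) \<and> (\<forall>A\<in>I. \<forall>B. B \<subseteq> A \<longrightarrow> B \<in> I)"

definition rand_vars :: "'s measure \<Rightarrow> ('s \<Rightarrow> 'u::metric_space) set" where
  "rand_vars M = borel_measurable M"

definition ky_fan :: "'s measure \<Rightarrow> ('s \<Rightarrow> 'u::metric_space) \<Rightarrow> ('s \<Rightarrow> 'u) \<Rightarrow> real" where
  "ky_fan M X Y = Inf {\<epsilon>. \<epsilon> > 0 \<and> measure M {s\<in>space M. dist (X s) (Y s) > \<epsilon>} \<le> \<epsilon>}"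

definition weak_cluster_const ::
  "'s measure \<Rightarrow> nat set set \<Rightarrow> real \<Rightarrow> (nat \<Rightarrow> 's \<Rightarrow> 'u::metric_space) \<Rightarrow> ('s \<Rightarrow> 'u) \<Rightarrow> real \<Rightarrow> bool" where
  "weak_cluster_const M I r X Y \<delta> \<longleftrightarrow> \<delta> > 0 \<and>
     (\<forall>\<epsilon>>0. {n. measure M {s\<in>space M. dist (X n s) (Y s) < r + \<epsilon>} > \<delta>} \<notin> I)"

definition weak_cluster_set ::
  "'s measure \<Rightarrow> nat set set \<Rightarrow> real \<Rightarrow> (nat \<Rightarrow> 's \<Rightarrow> 'u::metric_space) \<Rightarrow> ('s \<Rightarrow> 'u) set" where
  "weak_cluster_set M I r X = {Y \<in> rand_vars M. \<exists>\<delta>. weak_cluster_const M I r X Y \<delta>}"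

text \<open>Closedness of a set of random variables in the (pseudo)metric space of random
  variables with the Ky Fan metric (i.e. closedness of its image in the quotient by a.s. equality).\<close>
definition ky_fan_closed :: "'s measure \<Rightarrow> ('s \<Rightarrow> 'u::metric_space) set \<Rightarrow> bool" where
  "ky_fan_closed M A \<longleftrightarrow>
     (\<forall>Y\<in>rand_vars M. (\<forall>\<eta>>0. \<exists>Z\<in>A. ky_fan M Z Y < \<eta>) \<longrightarrow> (\<exists>Y'\<in>A. AE s in M. Y' s = Y s))"

end

theory Submission
  imports Defs
begin

text \<open>If \<open>Z\<close> is \<open>\<eta>\<close>-close to \<open>Y\<close> in the Ky Fan metric, then \<open>Z\<close> is within \<open>e < \<eta>\<close> of \<open>Y\<close> except on a
  set of probability at most \<open>e\<close>; the triangle inequality then transfers the frequent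
  \<open>(r + \<epsilon>/2)\<close>-closeness of \<open>X\<^sub>n\<close> to \<open>Z\<close> into \<open>(r + \<epsilon>)\<close>-closeness of \<open>X\<^sub>n\<close> to \<open>Y\<close>, losing at most
  \<open>e < c/2\<close> of probability. Hence a uniform lower bound \<open>c\<close> on the cluster constants makes
  \<open>c/2\<close> a weak cluster constant of every Ky Fan limit of weak cluster points.\<close>

lemma dist_eq_INF_dense:
  fixes x y :: "'a::metric_space"
  assumes "closure C = UNIV"
  shows "dist x y = (INF c\<in>C. dist x c + dist c y)"
proof (rule antisym)
  have "C \<noteq> {}"
    using assms by auto
  then show "dist x y \<le> (INF c\<in>C. dist x c + dist c y)"
    by (intro cINF_greatest) (auto intro: dist_triangle)
  show "(INF c\<in>C. dist x c + dist c y) \<le> dist x y"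
  proof (rule field_le_epsilon)
    fix e :: real
    assume "e > 0"
    then obtain c where "c \<in> C" "dist c x < e / 2"
      using closure_approachable[of x C] assms by (metis UNIV_I half_gt_zero)
    moreover have "dist c y \<le> dist c x + dist x y"
      by (rule dist_triangle)
    ultimately have "dist x c + dist c y \<le> dist x y + e"
      by (simp add: dist_commute)
    then show "(INF c\<in>C. dist x c + dist c y) \<le> dist x y + e"
      using \<open>c \<in> C\<close> by (meson bdd_belowI2 cINF_lower2 add_nonneg_nonneg zero_le_dist)
  qed
qed

text \<open>The library's \<open>borel_measurable_dist\<close> needs a second countable type; separability of the
  space suffices, since \<open>dist\<close> is then a countable infimum through a dense set.\<close>

lemma borel_measurable_dist_separable:
  fixes X Y :: "'s \<Rightarrow> 'u::metric_space"
  assumes "separable_space (euclidean :: 'u topology)"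
    and X: "X \<in> borel_measurable M" and Y: "Y \<in> borel_measurable M"
  shows "(\<lambda>s. dist (X s) (Y s)) \<in> borel_measurable M"
proof -
  obtain C :: "'u set" where "countable C" and dense: "closure C = UNIV"
    using assms(1) unfolding separable_space_def by auto
  have dist_to_point: "(\<lambda>s. dist (Z s) c) \<in> borel_measurable M"
    if "Z \<in> borel_measurable M" for Z :: "'s \<Rightarrow> 'u" and c
    using that by (intro borel_measurable_continuous_on[where f = "\<lambda>x. dist x c"] continuous_intros)
  have "(\<lambda>s. INF c\<in>C. dist (X s) c + dist c (Y s)) \<in> borel_measurable M"
    using \<open>countable C\<close> dist_to_point[OF X] dist_to_point[OF Y]
    by (intro borel_measurable_cINF_real borel_measurable_add) (simp_all add: dist_commute)
  then show ?thesis
    by (simp flip: dist_eq_INF_dense[OF dense])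
qed

lemma (in prob_space) ky_fan_less_imp_deviation:
  assumes "ky_fan M Z Y < \<eta>"
  obtains e where "0 < e" "e < \<eta>" "prob {s\<in>space M. dist (Z s) (Y s) > e} \<le> e"
proof -
  let ?S = "{e. e > 0 \<and> prob {s\<in>space M. dist (Z s) (Y s) > e} \<le> e}"
  have "1 \<in> ?S"
    by simp
  then show ?thesis
    using cInf_lessD[of ?S \<eta>] assms that unfolding ky_fan_def by blast
qed

lemma (in finite_measure) measure_dist_less_le_triangle:
  fixes X Y Z :: "'a \<Rightarrow> 'u::metric_space"
  assumes "{s\<in>space M. dist (X s) (Y s) < a + e} \<in> sets M"
    and "{s\<in>space M. dist (Z s) (Y s) > e} \<in> sets M"
  shows "measure M {s\<in>space M. dist (X s) (Z s) < a}
    \<le> measure M {s\<in>space M. dist (X s) (Y s) < a + e} + measure M {s\<in>space M. dist (Z s) (Y s) > e}"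
    (is "measure M ?A \<le> measure M ?B + measure M ?C")
proof -
  have "?A \<subseteq> ?B \<union> ?C"
  proof
    fix s
    assume "s \<in> ?A"
    moreover have "dist (X s) (Y s) \<le> dist (X s) (Z s) + dist (Z s) (Y s)"
      by (rule dist_triangle)
    ultimately show "s \<in> ?B \<union> ?C"
      by auto
  qed
  then have "measure M ?A \<le> measure M (?B \<union> ?C)"
    using assms by (intro finite_measure_mono) auto
  also have "\<dots> \<le> measure M ?B + measure M ?C"
    using assms by (intro measure_subadditive) auto
  finally show ?thesis .
qed

lemma nat_ideal_superset_notin:
  assumes "nat_ideal I" "A \<notin> I" "A \<subseteq> B"
  shows "B \<notin> I"
  using assms unfolding nat_ideal_def by blast

lemma (in prob_space) ky_fan_close_to_cluster_point_frequently_close: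
  fixes X :: "nat \<Rightarrow> 'a \<Rightarrow> 'u::metric_space"
  assumes "separable_space (euclidean :: 'u topology)" "nat_ideal I"
    and X: "\<forall>n. X n \<in> borel_measurable M"
    and Y: "Y \<in> borel_measurable M" and Z: "Z \<in> borel_measurable M"
    and cluster: "weak_cluster_const M I r X Z \<delta>" "c \<le> \<delta>"
    and "\<epsilon> > 0" and close: "ky_fan M Z Y < min (\<epsilon> / 2) (c / 2)"
  shows "{n. prob {s\<in>space M. dist (X n s) (Y s) < r + \<epsilon>} > c / 2} \<notin> I"
proof -
  obtain e where e: "0 < e" "e < min (\<epsilon> / 2) (c / 2)"
    and deviation: "prob {s\<in>space M. dist (Z s) (Y s) > e} \<le> e"
    using ky_fan_less_imp_deviation[OF close] .
  have dist_XY: "(\<lambda>s. dist (X n s) (Y s)) \<in> borel_measurable M" for n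
    using borel_measurable_dist_separable[OF assms(1)] X Y by blast
  have dist_ZY: "(\<lambda>s. dist (Z s) (Y s)) \<in> borel_measurable M"
    using borel_measurable_dist_separable[OF assms(1) Z Y] .
  have "{n. prob {s\<in>space M. dist (X n s) (Z s) < r + \<epsilon> / 2} > \<delta>}
    \<subseteq> {n. prob {s\<in>space M. dist (X n s) (Y s) < r + \<epsilon>} > c / 2}"
  proof (intro subsetI, unfold mem_Collect_eq)
    fix n
    assume frequent: "prob {s\<in>space M. dist (X n s) (Z s) < r + \<epsilon> / 2} > \<delta>"
    have "prob {s\<in>space M. dist (X n s) (Z s) < r + \<epsilon> / 2}
      \<le> prob {s\<in>space M. dist (X n s) (Y s) < (r + \<epsilon> / 2) + e}
        + prob {s\<in>space M. dist (Z s) (Y s) > e}"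
      using dist_XY[of n, unfolded borel_measurable_iff_less]
        dist_ZY[unfolded borel_measurable_iff_greater]
      by (intro measure_dist_less_le_triangle) simp_all
    moreover have "prob {s\<in>space M. dist (X n s) (Y s) < (r + \<epsilon> / 2) + e}
      \<le> prob {s\<in>space M. dist (X n s) (Y s) < r + \<epsilon>}"
      using dist_XY[of n] e by (intro finite_measure_mono) auto
    ultimately show "prob {s\<in>space M. dist (X n s) (Y s) < r + \<epsilon>} > c / 2"
      using frequent deviation e \<open>c \<le> \<delta>\<close> by simp
  qed
  moreover have "{n. prob {s\<in>space M. dist (X n s) (Z s) < r + \<epsilon> / 2} > \<delta>} \<notin> I"
    using cluster \<open>\<epsilon> > 0\<close> unfolding weak_cluster_const_def by simp
  ultimately show ?thesis
    using nat_ideal_superset_notin[OF \<open>nat_ideal I\<close>] by blast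
qed

theorem proposition3p13:
  fixes M :: "'s measure" and X :: "nat \<Rightarrow> 's \<Rightarrow> 'u::metric_space"
    and I :: "nat set set" and r :: real and \<delta> :: "('s \<Rightarrow> 'u) \<Rightarrow> real"
  assumes "prob_space M"
    and "separable_space (euclidean :: 'u topology)"
    and "r \<ge> 0"
    and "nat_ideal I"
    and "\<forall>n. X n \<in> rand_vars M"
    and "\<forall>Y\<in>weak_cluster_set M I r X. weak_cluster_const M I r X Y (\<delta> Y)"
    and "\<exists>c>0. \<forall>Y\<in>weak_cluster_set M I r X. c \<le> \<delta> Y"
  shows "ky_fan_closed M (weak_cluster_set M I r X)"
  unfolding ky_fan_closed_def
proof (intro ballI impI)
  interpret prob_space M by (rule assms(1))
  obtain c where "c > 0" and c: "\<forall>Y\<in>weak_cluster_set M I r X. c \<le> \<delta> Y"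
    using assms(7) by blast
  fix Y
  assume Y: "Y \<in> rand_vars M"
    and approx: "\<forall>\<eta>>0. \<exists>Z\<in>weak_cluster_set M I r X. ky_fan M Z Y < \<eta>"
  have "weak_cluster_const M I r X Y (c / 2)"
    unfolding weak_cluster_const_def
  proof (intro conjI allI impI)
    fix \<epsilon> :: real
    assume "\<epsilon> > 0"
    then obtain Z where Z: "Z \<in> weak_cluster_set M I r X" "ky_fan M Z Y < min (\<epsilon> / 2) (c / 2)"
      using approx \<open>c > 0\<close> by (metis half_gt_zero min_less_iff_conj)
    then show "{n. prob {s\<in>space M. dist (X n s) (Y s) < r + \<epsilon>} > c / 2} \<notin> I"
      using assms(2,4,5,6) Y c \<open>\<epsilon> > 0\<close>
      by (intro ky_fan_close_to_cluster_point_frequently_close[where Z = Z and \<delta> = "\<delta> Z"])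
         (auto simp: weak_cluster_set_def rand_vars_def)
  qed (use \<open>c > 0\<close> in simp)
  then show "\<exists>Y'\<in>weak_cluster_set M I r X. AE s in M. Y' s = Y s"
    using Y by (auto simp: weak_cluster_set_def)
qed

end
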